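(* Let $n\ge2$, $m\ge1$, and let $G$ be given by the presentation $$G=\Big\langle a_1,\dots,a_n,c_1,\dots,c_m \ \Big|\ [a_i,a_j]=\prod_{t=1}^m c_t^{\lambda_t^{ij}}\ (1\le i<j\le n),\ [a_i,c_j]=[c_k,c_r]=1 \text{ for all } i,j,k,r\Big\rangle$$ for some integers $\lambda_t^{ij}$. Then there are maps $\alpha_i,\gamma_t:G\to\mathbb{Z}$ such that every $g\in G$ can be written as $g=\prod_{i=1}^n a_i^{\alpha_i(g)}\prod_{t=1}^m c_t^{\gamma_t(g)}$, and this expression is unique: if $g=\prod_i a_i^{x_i}\prod_t c_t^{y_t}$ for integers $x_i,y_t$, then $x_i=\alpha_i(g)$ and $y_t=\gamma_t(g)$ for all $i,t$.
   Context: Commutators: $[g,h]=g^{-1}h^{-1}gh$. *)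

theory Defs
  imports "HOL-Algebra.Group"
begin

text \<open>Words over an alphabet of generators: a letter is (x, b), where b = True
  means the inverse letter x^-1.\<close>
type_synonym 'g word = "('g \<times> bool) list"

definition words :: "'g set \<Rightarrow> 'g word set" where
  "words S = {w. fst ` set w \<subseteq> S}"

definition winv :: "'g word \<Rightarrow> 'g word" where
  "winv w = rev (map (\<lambda>(x, b). (x, \<not> b)) w)"

definition wpow :: "'g word \<Rightarrow> int \<Rightarrow> 'g word" where
  "wpow w k = (if 0 \<le> k then concat (replicate (nat k) w)
               else concat (replicate (nat (- k)) (winv w)))"

definition letter :: "'g \<Rightarrow> 'g word" where
  "letter x = [(x, False)]"

definition wcomm :: "'g word \<Rightarrow> 'g word \<Rightarrow> 'g word" where
  "wcomm u v = winv u @ winv v @ u @ v"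

inductive_set pres_eq :: "'g set \<Rightarrow> ('g word \<times> 'g word) set \<Rightarrow> ('g word \<times> 'g word) set"
  for S R where
  refl: "w \<in> words S \<Longrightarrow> (w, w) \<in> pres_eq S R"
| sym: "(u, v) \<in> pres_eq S R \<Longrightarrow> (v, u) \<in> pres_eq S R"
| trans: "(u, v) \<in> pres_eq S R \<Longrightarrow> (v, w) \<in> pres_eq S R \<Longrightarrow> (u, w) \<in> pres_eq S R"
| cancel: "u \<in> words S \<Longrightarrow> v \<in> words S \<Longrightarrow> x \<in> S \<Longrightarrow>
           (u @ [(x, b), (x, \<not> b)] @ v, u @ v) \<in> pres_eq S R"
| rel: "(l, r) \<in> R \<Longrightarrow> u \<in> words S \<Longrightarrow> v \<in> words S \<Longrightarrow>
        (u @ l @ v, u @ r @ v) \<in> pres_eq S R"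

definition presented_group :: "'g set \<Rightarrow> ('g word \<times> 'g word) set \<Rightarrow> ('g word set) monoid" where
  "presented_group S R =
     \<lparr> carrier = words S // pres_eq S R,
       mult = (\<lambda>X Y. pres_eq S R `` {u @ v | u v. u \<in> X \<and> v \<in> Y}),
       one = pres_eq S R `` {[]} \<rparr>"

definition gen_elem :: "'g set \<Rightarrow> ('g word \<times> 'g word) set \<Rightarrow> 'g \<Rightarrow> 'g word set" where
  "gen_elem S R x = pres_eq S R `` {letter x}"

definition lprod :: "('a, 'b) monoid_scheme \<Rightarrow> 'a list \<Rightarrow> 'a" where
  "lprod G xs = foldr (\<lambda>g acc. g \<otimes>\<^bsub>G\<^esub> acc) xs \<one>\<^bsub>G\<^esub>"

datatype gen = A nat | C nat

definition gens :: "nat \<Rightarrow> nat \<Rightarrow> gen set" where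
  "gens n m = A ` {1..n} \<union> C ` {1..m}"

definition rels :: "nat \<Rightarrow> nat \<Rightarrow> (nat \<Rightarrow> nat \<Rightarrow> nat \<Rightarrow> int) \<Rightarrow> (gen word \<times> gen word) set" where
  "rels n m lam =
     {(wcomm (letter (A i)) (letter (A j)),
       concat (map (\<lambda>t. wpow (letter (C t)) (lam i j t)) [1..<Suc m])) | i j.
        1 \<le> i \<and> i < j \<and> j \<le> n}
   \<union> {(wcomm (letter (A i)) (letter (C j)), []) | i j. i \<in> {1..n} \<and> j \<in> {1..m}}
   \<union> {(wcomm (letter (C k)) (letter (C r)), []) | k r. k \<in> {1..m} \<and> r \<in> {1..m}}"

definition Gpres :: "nat \<Rightarrow> nat \<Rightarrow> (nat \<Rightarrow> nat \<Rightarrow> nat \<Rightarrow> int) \<Rightarrow> (gen word set) monoid" where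
  "Gpres n m lam = presented_group (gens n m) (rels n m lam)"

definition a_el :: "nat \<Rightarrow> nat \<Rightarrow> (nat \<Rightarrow> nat \<Rightarrow> nat \<Rightarrow> int) \<Rightarrow> nat \<Rightarrow> gen word set" where
  "a_el n m lam i = gen_elem (gens n m) (rels n m lam) (A i)"

definition c_el :: "nat \<Rightarrow> nat \<Rightarrow> (nat \<Rightarrow> nat \<Rightarrow> nat \<Rightarrow> int) \<Rightarrow> nat \<Rightarrow> gen word set" where
  "c_el n m lam t = gen_elem (gens n m) (rels n m lam) (C t)"

definition normal_form :: "nat \<Rightarrow> nat \<Rightarrow> (nat \<Rightarrow> nat \<Rightarrow> nat \<Rightarrow> int) \<Rightarrow>
    (nat \<Rightarrow> int) \<Rightarrow> (nat \<Rightarrow> int) \<Rightarrow> gen word set" where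
  "normal_form n m lam x y =
     lprod (Gpres n m lam) (map (\<lambda>i. a_el n m lam i [^]\<^bsub>Gpres n m lam\<^esub> x i) [1..<Suc n])
     \<otimes>\<^bsub>Gpres n m lam\<^esub>
     lprod (Gpres n m lam) (map (\<lambda>t. c_el n m lam t [^]\<^bsub>Gpres n m lam\<^esub> y t) [1..<Suc m])"

end

theory Submission
  imports Defs
begin

text \<open>Left multiplication by a generator has an explicit description in normal-form
  coordinates (x, y) in Z^n x Z^m: c_t adds 1 to y_t, while a_i adds 1 to x_i and, since it must
  be moved past the factors a_k^(x_k) with k < i, adds -(sum over k < i of x_k lam_t^(ki)) to every
  y_t. These formulas define an action of the free group on Z^n x Z^m that respects the defining
  relations, hence a coordinate map on G. By induction on words every element equals the normal
  form of its coordinates, and the coordinates of a normal form are its exponents, which gives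
  uniqueness.\<close>

section \<open>Presented groups\<close>

lemma words_Nil [simp]: "[] \<in> words S"
  by (simp add: words_def)

lemma words_Cons [simp]: "l # w \<in> words S \<longleftrightarrow> fst l \<in> S \<and> w \<in> words S"
  by (auto simp: words_def)

lemma words_append [simp]: "u @ v \<in> words S \<longleftrightarrow> u \<in> words S \<and> v \<in> words S"
  by (auto simp: words_def)

lemma words_concat: "(\<And>w. w \<in> set ws \<Longrightarrow> w \<in> words S) \<Longrightarrow> concat ws \<in> words S"
  by (induct ws) auto

lemma winv_Nil [simp]: "winv [] = []"
  by (simp add: winv_def)

lemma winv_Cons [simp]: "winv ((x, b) # w) = winv w @ [(x, \<not> b)]"
  by (simp add: winv_def)

lemma words_winv [simp]: "winv w \<in> words S \<longleftrightarrow> w \<in> words S"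
  by (induct w) auto

lemma words_letter [simp]: "letter x \<in> words S \<longleftrightarrow> x \<in> S"
  by (simp add: letter_def)

lemma words_replicate [simp]: "w \<in> words S \<Longrightarrow> concat (replicate p w) \<in> words S"
  by (induct p) auto

lemma words_wpow [simp]: "w \<in> words S \<Longrightarrow> wpow w k \<in> words S"
  by (simp add: wpow_def)

lemma words_wcomm [simp]: "u \<in> words S \<Longrightarrow> v \<in> words S \<Longrightarrow> wcomm u v \<in> words S"
  by (simp add: wcomm_def)

definition rels_over :: "'g set \<Rightarrow> ('g word \<times> 'g word) set \<Rightarrow> bool" where
  "rels_over S R \<longleftrightarrow> (\<forall>(l, r) \<in> R. l \<in> words S \<and> r \<in> words S)"

lemma pres_eq_words:
  assumes "rels_over S R" "(u, v) \<in> pres_eq S R"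
  shows "u \<in> words S \<and> v \<in> words S"
  using assms(2) by induct (use assms(1) in \<open>auto simp: rels_over_def\<close>)

lemma pres_eq_append_left:
  assumes "(u, v) \<in> pres_eq S R" "w \<in> words S"
  shows "(w @ u, w @ v) \<in> pres_eq S R"
  using assms(1)
proof induct
  case (cancel u v x b)
  then show ?case using pres_eq.cancel[of "w @ u"] assms(2) by simp
next
  case (rel l r u v)
  then show ?case using pres_eq.rel[of l r R "w @ u"] assms(2) by simp
qed (use assms(2) in \<open>auto intro: pres_eq.intros\<close>)

lemma pres_eq_append_right:
  assumes "(u, v) \<in> pres_eq S R" "w \<in> words S"
  shows "(u @ w, v @ w) \<in> pres_eq S R"
  using assms(1)
proof induct
  case (cancel u v x b)
  then show ?case using pres_eq.cancel[of u S "v @ w"] assms(2) by simp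
next
  case (rel l r u v)
  then show ?case using pres_eq.rel[of l r R u S "v @ w"] assms(2) by simp
qed (use assms(2) in \<open>auto intro: pres_eq.intros\<close>)

lemma pres_eq_append:
  assumes "rels_over S R" "(u, u') \<in> pres_eq S R" "(v, v') \<in> pres_eq S R"
  shows "(u @ v, u' @ v') \<in> pres_eq S R"
  by (meson assms pres_eq.trans pres_eq_append_left pres_eq_append_right pres_eq_words)

lemma pres_eq_winv_append:
  assumes "w \<in> words S"
  shows "(winv w @ w, []) \<in> pres_eq S R"
  using assms
proof (induct w)
  case Nil
  then show ?case by (simp add: pres_eq.refl)
next
  case (Cons l w)
  obtain x b where l: "l = (x, b)" by force
  have "(winv w @ [(x, \<not> b), (x, \<not> \<not> b)] @ w, winv w @ w) \<in> pres_eq S R"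
    using Cons.prems l by (intro pres_eq.cancel) auto
  then show ?case using Cons l by (auto intro: pres_eq.trans)
qed

lemma equiv_pres_eq: "rels_over S R \<Longrightarrow> equiv (words S) (pres_eq S R)"
  unfolding equiv_def refl_on_def sym_def trans_def
  using pres_eq_words by (auto intro: pres_eq.refl pres_eq.sym pres_eq.trans)

definition pres_class :: "'g set \<Rightarrow> ('g word \<times> 'g word) set \<Rightarrow> 'g word \<Rightarrow> 'g word set" where
  "pres_class S R w = pres_eq S R `` {w}"

lemma pres_class_eq_iff:
  "rels_over S R \<Longrightarrow> u \<in> words S \<Longrightarrow> v \<in> words S \<Longrightarrow>
    pres_class S R u = pres_class S R v \<longleftrightarrow> (u, v) \<in> pres_eq S R"
  unfolding pres_class_def by (rule eq_equiv_class_iff[OF equiv_pres_eq])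

lemma self_in_pres_class: "w \<in> words S \<Longrightarrow> w \<in> pres_class S R w"
  by (simp add: pres_class_def pres_eq.refl)

lemma carrier_presented_group: "carrier (presented_group S R) = pres_class S R ` words S"
  by (auto simp: presented_group_def quotient_def pres_class_def)

lemma one_presented_group: "\<one>\<^bsub>presented_group S R\<^esub> = pres_class S R []"
  by (simp add: presented_group_def pres_class_def)

lemma mult_presented_group:
  assumes "rels_over S R" "u \<in> words S" "v \<in> words S"
  shows "pres_class S R u \<otimes>\<^bsub>presented_group S R\<^esub> pres_class S R v = pres_class S R (u @ v)"
proof -
  have "pres_eq S R `` {u' @ v' | u' v'. u' \<in> pres_class S R u \<and> v' \<in> pres_class S R v}
        = pres_class S R (u @ v)"
  proof (intro equalityI subsetI)
    fix z assume "z \<in> pres_eq S R `` {u' @ v' | u' v'. u' \<in> pres_class S R u \<and> v' \<in> pres_class S R v}"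
    then obtain u' v' where "(u, u') \<in> pres_eq S R" "(v, v') \<in> pres_eq S R" "(u' @ v', z) \<in> pres_eq S R"
      by (auto simp: pres_class_def)
    then show "z \<in> pres_class S R (u @ v)"
      using pres_eq_append[OF assms(1)] pres_eq.trans unfolding pres_class_def by blast
  next
    fix z assume "z \<in> pres_class S R (u @ v)"
    moreover have "u @ v \<in> {u' @ v' | u' v'. u' \<in> pres_class S R u \<and> v' \<in> pres_class S R v}"
      using assms(2,3) self_in_pres_class by blast
    ultimately show "z \<in> pres_eq S R `` {u' @ v' | u' v'. u' \<in> pres_class S R u \<and> v' \<in> pres_class S R v}"
      by (auto simp: pres_class_def)
  qed
  then show ?thesis by (simp add: presented_group_def)
qed

lemma pres_class_winv_mult:
  "rels_over S R \<Longrightarrow> w \<in> words S \<Longrightarrow>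
    pres_class S R (winv w) \<otimes>\<^bsub>presented_group S R\<^esub> pres_class S R w = \<one>\<^bsub>presented_group S R\<^esub>"
  by (simp add: mult_presented_group one_presented_group pres_class_eq_iff pres_eq_winv_append)

lemma group_presented_group:
  assumes "rels_over S R"
  shows "group (presented_group S R)"
proof (rule groupI)
  fix x assume "x \<in> carrier (presented_group S R)"
  then obtain w where "w \<in> words S" "x = pres_class S R w"
    by (auto simp: carrier_presented_group)
  then show "\<exists>y \<in> carrier (presented_group S R). y \<otimes>\<^bsub>presented_group S R\<^esub> x = \<one>\<^bsub>presented_group S R\<^esub>"
    using pres_class_winv_mult[OF assms] words_winv unfolding carrier_presented_group by blast
qed (auto simp: carrier_presented_group one_presented_group mult_presented_group[OF assms])

lemma inv_presented_group:
  assumes "rels_over S R" "w \<in> words S"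
  shows "inv\<^bsub>presented_group S R\<^esub> (pres_class S R w) = pres_class S R (winv w)"
  using group.inv_equality[OF group_presented_group, OF assms(1) pres_class_winv_mult[OF assms]] assms
  by (simp add: carrier_presented_group)

lemma lprod_Nil [simp]: "lprod G [] = \<one>\<^bsub>G\<^esub>"
  by (simp add: lprod_def)

lemma lprod_Cons [simp]: "lprod G (g # gs) = g \<otimes>\<^bsub>G\<^esub> lprod G gs"
  by (simp add: lprod_def)

context
  fixes S :: "'g set" and R :: "('g word \<times> 'g word) set"
  assumes rels: "rels_over S R"
begin

interpretation P: group "presented_group S R"
  by (rule group_presented_group[OF rels])

lemma pres_class_closed [simp]: "w \<in> words S \<Longrightarrow> pres_class S R w \<in> carrier (presented_group S R)"
  by (simp add: carrier_presented_group)

lemma pres_class_append: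
  "u \<in> words S \<Longrightarrow> v \<in> words S \<Longrightarrow>
    pres_class S R (u @ v) = pres_class S R u \<otimes>\<^bsub>presented_group S R\<^esub> pres_class S R v"
  by (simp add: mult_presented_group[OF rels])

lemma pres_class_concat:
  "(\<And>w. w \<in> set ws \<Longrightarrow> w \<in> words S) \<Longrightarrow>
    pres_class S R (concat ws) = lprod (presented_group S R) (map (pres_class S R) ws)"
  by (induct ws) (simp_all add: one_presented_group pres_class_append words_concat)

lemma pres_class_replicate:
  "w \<in> words S \<Longrightarrow>
    pres_class S R (concat (replicate p w)) = pres_class S R w [^]\<^bsub>presented_group S R\<^esub> p"
  by (induct p) (simp_all add: one_presented_group pres_class_append P.nat_pow_Suc2 del: P.nat_pow_Suc nat_pow_Suc)

lemma pres_class_wpow: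
  assumes "w \<in> words S"
  shows "pres_class S R (wpow w k) = pres_class S R w [^]\<^bsub>presented_group S R\<^esub> k"
proof (cases "k < 0")
  case True
  have "pres_class S R (wpow w k) = pres_class S R (winv w) [^]\<^bsub>presented_group S R\<^esub> nat (- k)"
    using True assms by (simp add: wpow_def pres_class_replicate)
  also have "\<dots> = inv\<^bsub>presented_group S R\<^esub> (pres_class S R w [^]\<^bsub>presented_group S R\<^esub> nat (- k))"
    using assms by (simp add: inv_presented_group[OF rels, symmetric] P.nat_pow_inv)
  also have "\<dots> = pres_class S R w [^]\<^bsub>presented_group S R\<^esub> k"
    using True assms by (simp add: pow_nat P.int_pow_neg[symmetric])
  finally show ?thesis .
next
  case False
  then show ?thesis
    using assms by (simp add: wpow_def pres_class_replicate pow_nat)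
qed

lemma pres_class_wcomm:
  "u \<in> words S \<Longrightarrow> v \<in> words S \<Longrightarrow>
    pres_class S R (wcomm u v) =
      inv\<^bsub>presented_group S R\<^esub> (pres_class S R u) \<otimes>\<^bsub>presented_group S R\<^esub>
      inv\<^bsub>presented_group S R\<^esub> (pres_class S R v) \<otimes>\<^bsub>presented_group S R\<^esub>
      pres_class S R u \<otimes>\<^bsub>presented_group S R\<^esub> pres_class S R v"
  by (simp add: wcomm_def pres_class_append inv_presented_group[OF rels] P.m_assoc)

lemma pres_class_rel:
  assumes "(l, r) \<in> R"
  shows "pres_class S R l = pres_class S R r"
proof -
  have "([] @ l @ [], [] @ r @ []) \<in> pres_eq S R"
    using assms by (intro pres_eq.rel) auto
  moreover have "l \<in> words S" "r \<in> words S"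
    using assms rels by (auto simp: rels_over_def)
  ultimately show ?thesis
    by (simp add: pres_class_eq_iff[OF rels])
qed

end

lemma foldr_concat: "foldr f (concat xss) = foldr (\<lambda>xs. foldr f xs) xss"
  by (induct xss) auto

lemma pres_eq_foldr_eq:
  fixes act :: "'g \<times> bool \<Rightarrow> 's \<Rightarrow> 's"
  assumes "(u, v) \<in> pres_eq S R"
    and "\<And>x b s. x \<in> S \<Longrightarrow> act (x, b) (act (x, \<not> b) s) = s"
    and "\<And>l r. (l, r) \<in> R \<Longrightarrow> foldr act l = foldr act r"
  shows "foldr act u = foldr act v"
  using assms(1)
proof induct
  case (cancel u v x b)
  then show ?case using assms(2) by (simp add: fun_eq_iff)
qed (simp_all add: assms(3))

section \<open>Powers and products of powers in a group\<close>

lemma (in group) inv_m_cancel_left [simp]: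
  "x \<in> carrier G \<Longrightarrow> y \<in> carrier G \<Longrightarrow> inv x \<otimes> (x \<otimes> y) = y"
  by (simp add: m_assoc[symmetric])

lemma (in group) m_inv_cancel_left [simp]:
  "x \<in> carrier G \<Longrightarrow> y \<in> carrier G \<Longrightarrow> x \<otimes> (inv x \<otimes> y) = y"
  by (simp add: m_assoc[symmetric])

lemma (in group) conj_int_pow:
  assumes "g \<in> carrier G" "x \<in> carrier G"
  shows "g \<otimes> x [^] (k::int) \<otimes> inv g = (g \<otimes> x \<otimes> inv g) [^] k"
proof -
  have "group_hom G G (\<lambda>x. g \<otimes> x \<otimes> inv g)"
    using assms(1) by unfold_locales (auto simp: hom_def m_assoc)
  then show ?thesis
    using assms(2) by (rule group_hom.hom_int_pow)
qed

lemma (in group) int_pow_commutes: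
  assumes "x \<otimes> y = y \<otimes> x" "x \<in> carrier G" "y \<in> carrier G"
  shows "x [^] (k::int) \<otimes> y = y \<otimes> x [^] k"
proof -
  have "inv y \<otimes> x [^] k \<otimes> inv (inv y) = (inv y \<otimes> x \<otimes> inv (inv y)) [^] k"
    using assms(2,3) by (intro conj_int_pow) auto
  also have "inv y \<otimes> x \<otimes> inv (inv y) = x"
    using assms by (simp add: m_assoc)
  finally have "inv y \<otimes> (x [^] k \<otimes> y) = x [^] k"
    using assms(2,3) by (simp add: m_assoc)
  then show ?thesis
    using assms(2,3) by (metis int_pow_closed m_closed m_inv_cancel_left)
qed

lemma (in group) commute_if_commutator_one:
  assumes "x \<in> carrier G" "y \<in> carrier G" "inv x \<otimes> inv y \<otimes> x \<otimes> y = \<one>"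
  shows "x \<otimes> y = y \<otimes> x"
proof -
  have "x \<otimes> y = y \<otimes> x \<otimes> (inv x \<otimes> inv y \<otimes> x \<otimes> y)"
    using assms(1,2) by (simp add: m_assoc)
  then show ?thesis
    using assms by simp
qed

lemma (in group) int_pow_mult_equivariant:
  fixes act :: "int \<Rightarrow> 's \<Rightarrow> 's" and \<Phi> :: "'a \<Rightarrow> 's"
  assumes x: "x \<in> carrier G"
    and step: "\<And>g. g \<in> carrier G \<Longrightarrow> \<Phi> (x \<otimes> g) = act 1 (\<Phi> g)"
    and act_add: "\<And>p q s. act p (act q s) = act (q + p) s" and act_0: "\<And>s. act 0 s = s"
    and g: "g \<in> carrier G"
  shows "\<Phi> (x [^] (k::int) \<otimes> g) = act k (\<Phi> g)"
proof -
  have nat: "\<Phi> (x [^] p \<otimes> h) = act (int p) (\<Phi> h)" if "h \<in> carrier G" for p :: nat and h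
  proof (induct p)
    case 0
    then show ?case using that by (simp add: act_0)
  next
    case (Suc p)
    have "x [^] Suc p \<otimes> h = x \<otimes> (x [^] p \<otimes> h)"
      using x that by (subst nat_pow_Suc2) (simp_all add: m_assoc)
    then show ?case
      using Suc x that by (simp add: step act_add add.commute)
  qed
  show ?thesis
  proof (cases "k < 0")
    case True
    let ?h = "inv (x [^] nat (- k)) \<otimes> g"
    have "\<Phi> g = \<Phi> (x [^] nat (- k) \<otimes> ?h)"
      using x g by simp
    also have "\<dots> = act (- k) (\<Phi> ?h)"
      using nat[of ?h "nat (- k)"] x g True by simp
    finally have "act k (\<Phi> g) = \<Phi> ?h"
      by (simp add: act_add act_0)
    moreover have "x [^] k = inv (x [^] nat (- k))"
      using x True by (simp add: pow_nat int_pow_neg[symmetric])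
    ultimately show ?thesis
      by simp
  next
    case False
    then show ?thesis
      using nat[OF g, of "nat k"] by (simp add: pow_nat)
  qed
qed

definition pow_prod :: "('a, 'b) monoid_scheme \<Rightarrow> ('c \<Rightarrow> 'a) \<Rightarrow> 'c list \<Rightarrow> ('c \<Rightarrow> int) \<Rightarrow> 'a" where
  "pow_prod G f ts e = lprod G (map (\<lambda>t. f t [^]\<^bsub>G\<^esub> e t) ts)"

context group
begin

lemma pow_prod_Nil [simp]: "pow_prod G f [] e = \<one>"
  by (simp add: pow_prod_def)

lemma pow_prod_Cons [simp]: "pow_prod G f (t # ts) e = f t [^] e t \<otimes> pow_prod G f ts e"
  by (simp add: pow_prod_def)

lemma pow_prod_closed [simp]: "f ` set ts \<subseteq> carrier G \<Longrightarrow> pow_prod G f ts e \<in> carrier G"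
  by (induct ts) auto

lemma pow_prod_append [simp]:
  "f ` set xs \<subseteq> carrier G \<Longrightarrow> f ` set ys \<subseteq> carrier G \<Longrightarrow>
    pow_prod G f (xs @ ys) e = pow_prod G f xs e \<otimes> pow_prod G f ys e"
  by (induct xs) (auto simp: m_assoc)

lemma pow_prod_cong:
  "(\<And>t. t \<in> set ts \<Longrightarrow> e t = e' t) \<Longrightarrow> pow_prod G f ts e = pow_prod G f ts e'"
  by (induct ts) auto

lemma pow_prod_zero [simp]: "pow_prod G f ts (\<lambda>_. 0) = \<one>"
  by (induct ts) auto

lemma pow_prod_indicator:
  "f ` set ts \<subseteq> carrier G \<Longrightarrow> distinct ts \<Longrightarrow>
    pow_prod G f ts (\<lambda>s. if s = t then 1 else 0) = (if t \<in> set ts then f t else \<one>)"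
  by (induct ts) auto

lemma pow_prod_commutes:
  assumes "f ` set ts \<subseteq> carrier G" "z \<in> carrier G" "\<And>t. t \<in> set ts \<Longrightarrow> f t \<otimes> z = z \<otimes> f t"
  shows "pow_prod G f ts e \<otimes> z = z \<otimes> pow_prod G f ts e"
  using assms(1,3)
proof (induct ts)
  case Nil
  then show ?case using assms(2) by simp
next
  case (Cons t ts)
  then have "f t [^] e t \<otimes> z = z \<otimes> f t [^] e t"
    using assms(2) by (intro int_pow_commutes) auto
  with Cons assms(2) show ?case
    by (simp add: m_assoc) (simp add: m_assoc[symmetric])
qed

context
  fixes f :: "'c \<Rightarrow> 'a" and ts :: "'c list"
  assumes closed: "f ` set ts \<subseteq> carrier G"
    and pairwise_commute: "\<And>s t. s \<in> set ts \<Longrightarrow> t \<in> set ts \<Longrightarrow> f s \<otimes> f t = f t \<otimes> f s"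
begin

lemma pow_prod_mult: "pow_prod G f ts e \<otimes> pow_prod G f ts e' = pow_prod G f ts (\<lambda>t. e t + e' t)"
  using closed pairwise_commute
proof (induct ts)
  case (Cons t ts)
  then have ft: "f t \<in> carrier G" and rest: "f ` set ts \<subseteq> carrier G" by auto
  have "f s \<otimes> f t [^] k = f t [^] k \<otimes> f s" if "s \<in> set ts" for s and k :: int
    using that Cons.prems(2) ft rest int_pow_commutes[of "f t" "f s" k] by auto
  then have comm: "pow_prod G f ts e \<otimes> f t [^] e' t = f t [^] e' t \<otimes> pow_prod G f ts e"
    using ft rest by (intro pow_prod_commutes) auto
  have "pow_prod G f (t # ts) e \<otimes> pow_prod G f (t # ts) e' =
      f t [^] e t \<otimes> (pow_prod G f ts e \<otimes> f t [^] e' t) \<otimes> pow_prod G f ts e'"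
    using ft rest by (simp add: m_assoc)
  also have "\<dots> = f t [^] e t \<otimes> (f t [^] e' t \<otimes> pow_prod G f ts e) \<otimes> pow_prod G f ts e'"
    by (simp only: comm)
  also have "\<dots> = (f t [^] e t \<otimes> f t [^] e' t) \<otimes> (pow_prod G f ts e \<otimes> pow_prod G f ts e')"
    using ft rest by (simp add: m_assoc)
  finally show ?case
    using Cons ft by (simp add: int_pow_mult)
qed simp

lemma pow_prod_int_pow: "pow_prod G f ts e [^] (k::int) = pow_prod G f ts (\<lambda>t. k * e t)"
  using closed pairwise_commute
proof (induct ts)
  case (Cons t ts)
  then have ft: "f t \<in> carrier G" and rest: "f ` set ts \<subseteq> carrier G" by auto
  have "f s \<otimes> f t [^] k = f t [^] k \<otimes> f s" if "s \<in> set ts" for s and k :: int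
    using that Cons.prems(2) ft rest int_pow_commutes[of "f t" "f s" k] by auto
  then have "f t [^] e t \<otimes> pow_prod G f ts e = pow_prod G f ts e \<otimes> f t [^] e t"
    using ft rest by (intro pow_prod_commutes[symmetric]) auto
  then have "(f t [^] e t \<otimes> pow_prod G f ts e) [^] k = (f t [^] e t) [^] k \<otimes> pow_prod G f ts e [^] k"
    using ft rest by (intro int_pow_mult_distrib) auto
  with Cons ft rest show ?case
    by (simp add: int_pow_pow mult.commute)
qed simp

end

end

section \<open>Normal-form coordinates\<close>

type_synonym coords = "(nat \<Rightarrow> int) \<times> (nat \<Rightarrow> int)"

text \<open>Moving a_i to the left past a_k^(x k), k < i, produces the central factor
  prod_t c_t^(- x k * lam k i t); a_carry collects these exponents.\<close>

definition a_carry :: "(nat \<Rightarrow> nat \<Rightarrow> nat \<Rightarrow> int) \<Rightarrow> nat \<Rightarrow> (nat \<Rightarrow> int) \<Rightarrow> nat \<Rightarrow> int" where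
  "a_carry lam i x t = - (\<Sum>k\<in>{1..<i}. x k * lam k i t)"

text \<open>act_a lam i k and act_c t k are left multiplication by a_i^k and c_t^k, read in
  normal-form coordinates.\<close>

definition act_a :: "(nat \<Rightarrow> nat \<Rightarrow> nat \<Rightarrow> int) \<Rightarrow> nat \<Rightarrow> int \<Rightarrow> coords \<Rightarrow> coords" where
  "act_a lam i k s = (case s of (x, y) \<Rightarrow> (x(i := x i + k), \<lambda>t. y t + k * a_carry lam i x t))"

definition act_c :: "nat \<Rightarrow> int \<Rightarrow> coords \<Rightarrow> coords" where
  "act_c t k s = (case s of (x, y) \<Rightarrow> (x, y(t := y t + k)))"

fun act_letter :: "(nat \<Rightarrow> nat \<Rightarrow> nat \<Rightarrow> int) \<Rightarrow> gen \<times> bool \<Rightarrow> coords \<Rightarrow> coords" where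
  "act_letter lam (A i, b) = act_a lam i (if b then -1 else 1)"
| "act_letter lam (C t, b) = act_c t (if b then -1 else 1)"

lemma a_carry_upd_ge: "j \<le> i \<Longrightarrow> a_carry lam j (x(i := v)) = a_carry lam j x"
  unfolding a_carry_def by (intro ext arg_cong[where f = uminus] sum.cong) auto

lemma a_carry_upd_lt:
  assumes "1 \<le> i" "i < j"
  shows "a_carry lam j (x(i := v)) t = a_carry lam j x t - (v - x i) * lam i j t"
proof -
  have "(\<Sum>k\<in>{1..<j}. (x(i := v)) k * lam k j t) = (\<Sum>k\<in>{1..<j}. x k * lam k j t + (if k = i then (v - x i) * lam i j t else 0))"
    by (intro sum.cong) (auto simp: left_diff_distrib)
  then show ?thesis
    using assms by (simp add: a_carry_def sum.distrib)
qed

lemma act_a_add: "act_a lam i p (act_a lam i q s) = act_a lam i (q + p) s"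
  by (cases s) (auto simp: act_a_def a_carry_upd_ge algebra_simps)

lemma act_a_0 [simp]: "act_a lam i 0 s = s"
  by (cases s) (auto simp: act_a_def)

lemma act_c_add: "act_c t p (act_c t q s) = act_c t (q + p) s"
  by (cases s) (auto simp: act_c_def)

lemma act_c_0 [simp]: "act_c t 0 s = s"
  by (cases s) (auto simp: act_c_def)

lemma act_a_commutator:
  assumes "1 \<le> i" "i < j"
  shows "act_a lam i (-1) (act_a lam j (-1) (act_a lam i 1 (act_a lam j 1 (x, y)))) = (x, \<lambda>t. y t + lam i j t)"
  using assms by (auto simp: act_a_def a_carry_upd_ge a_carry_upd_lt fun_eq_iff)

lemma act_c_funpow: "act_c t k ^^ p = act_c t (int p * k)"
  by (induct p) (auto simp: act_c_add algebra_simps)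

lemma foldr_act_c:
  "distinct ts \<Longrightarrow>
    foldr (\<lambda>t. act_c t (z t)) ts (x, y) = (x, \<lambda>t. y t + (if t \<in> set ts then z t else 0))"
  by (induct ts) (auto simp: act_c_def fun_eq_iff)

lemma act_letter_cancel: "act_letter lam (g, b) (act_letter lam (g, \<not> b) s) = s"
  by (cases g) (auto simp: act_a_add act_c_add)

lemma foldr_act_letter_wpow_C: "foldr (act_letter lam) (wpow (letter (C t)) k) = act_c t k"
proof -
  have "foldr (act_letter lam) (concat (replicate p [(C t, b)])) = act_c t (if b then -1 else 1) ^^ p"
    for p b by (induct p) auto
  then show ?thesis
    by (simp add: wpow_def letter_def act_c_funpow)
qed

section \<open>Groups generated by a_1, ..., a_n and central c_1, ..., c_m\<close>

lemma upt_split_at: "i \<in> {1..n} \<Longrightarrow> [1..<Suc n] = [1..<i] @ i # [Suc i..<Suc n]"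
  using upt_add_eq_append[of 1 i "Suc n - i"] by (simp add: upt_conv_Cons)

locale class2_generators = group G for G (structure) +
  fixes n m :: nat and lam :: "nat \<Rightarrow> nat \<Rightarrow> nat \<Rightarrow> int" and a c :: "nat \<Rightarrow> 'a"
  assumes a_closed: "i \<in> {1..n} \<Longrightarrow> a i \<in> carrier G"
    and c_closed: "t \<in> {1..m} \<Longrightarrow> c t \<in> carrier G"
    and a_c_commute: "i \<in> {1..n} \<Longrightarrow> t \<in> {1..m} \<Longrightarrow> a i \<otimes> c t = c t \<otimes> a i"
    and c_c_commute: "s \<in> {1..m} \<Longrightarrow> t \<in> {1..m} \<Longrightarrow> c s \<otimes> c t = c t \<otimes> c s"
    and a_a_commutator: "1 \<le> i \<Longrightarrow> i < j \<Longrightarrow> j \<le> n \<Longrightarrow>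
      inv (a i) \<otimes> inv (a j) \<otimes> a i \<otimes> a j = pow_prod G c [1..<Suc m] (lam i j)"
begin

definition c_part :: "(nat \<Rightarrow> int) \<Rightarrow> 'a" where
  "c_part y = pow_prod G c [1..<Suc m] y"

definition a_part :: "(nat \<Rightarrow> int) \<Rightarrow> 'a" where
  "a_part x = pow_prod G a [1..<Suc n] x"

definition elem_of_coords :: "coords \<Rightarrow> 'a" where
  "elem_of_coords s = a_part (fst s) \<otimes> c_part (snd s)"

lemma a_image_closed [simp]: "set is \<subseteq> {1..n} \<Longrightarrow> a ` set is \<subseteq> carrier G"
  using a_closed by auto

lemma c_part_closed [simp]: "c_part y \<in> carrier G"
  unfolding c_part_def using c_closed by (intro pow_prod_closed) auto

lemma a_part_closed [simp]: "a_part x \<in> carrier G"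
  unfolding a_part_def by (intro pow_prod_closed a_image_closed) auto

lemma elem_of_coords_closed [simp]: "elem_of_coords s \<in> carrier G"
  by (simp add: elem_of_coords_def)

lemma elem_of_coords_zero [simp]: "elem_of_coords (\<lambda>_. 0, \<lambda>_. 0) = \<one>"
  by (simp add: elem_of_coords_def a_part_def c_part_def)

lemma c_part_mult: "c_part y \<otimes> c_part y' = c_part (\<lambda>t. y t + y' t)"
  unfolding c_part_def using c_closed c_c_commute by (intro pow_prod_mult) auto

lemma c_part_zero [simp]: "c_part (\<lambda>_. 0) = \<one>"
  by (simp add: c_part_def)

lemma c_part_int_pow: "c_part y [^] (k::int) = c_part (\<lambda>t. k * y t)"
  unfolding c_part_def using c_closed c_c_commute by (intro pow_prod_int_pow) auto

lemma c_part_indicator: "t \<in> {1..m} \<Longrightarrow> c_part (\<lambda>s. if s = t then 1 else 0) = c t"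
  unfolding c_part_def using c_closed by (subst pow_prod_indicator) auto

lemma c_part_commutes_a: "i \<in> {1..n} \<Longrightarrow> c_part y \<otimes> a i = a i \<otimes> c_part y"
  unfolding c_part_def using c_closed a_closed a_c_commute by (intro pow_prod_commutes) auto

lemma c_part_commutes_a_int_pow: "i \<in> {1..n} \<Longrightarrow> c_part y \<otimes> a i [^] (e::int) = a i [^] e \<otimes> c_part y"
  using a_closed by (intro int_pow_commutes[symmetric] c_part_commutes_a[symmetric]) auto

lemma a_prod_commutes_c_part:
  "set is \<subseteq> {1..n} \<Longrightarrow> pow_prod G a is x \<otimes> c_part y = c_part y \<otimes> pow_prod G a is x"
  using a_closed c_part_commutes_a by (intro pow_prod_commutes) auto

lemma a_conj_a:
  assumes "1 \<le> k" "k < i" "i \<le> n"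
  shows "a i \<otimes> a k \<otimes> inv (a i) = a k \<otimes> c_part (\<lambda>t. - lam k i t)"
proof -
  let ?Z = "c_part (lam k i)" and ?W = "c_part (\<lambda>t. - lam k i t)"
  have ak: "a k \<in> carrier G" and ai: "a i \<in> carrier G"
    using assms a_closed by auto
  have "a i \<otimes> a k \<otimes> (inv (a k) \<otimes> inv (a i) \<otimes> a k \<otimes> a i) = a k \<otimes> a i"
    using ak ai by (simp add: m_assoc)
  then have "a k \<otimes> a i = a i \<otimes> a k \<otimes> ?Z"
    using a_a_commutator[OF assms] by (simp add: c_part_def)
  then have "a k \<otimes> a i \<otimes> ?W = a i \<otimes> a k \<otimes> (?Z \<otimes> ?W)"
    using ak ai by (simp add: m_assoc)
  also have "?Z \<otimes> ?W = \<one>"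
    by (simp add: c_part_mult)
  finally have "a i \<otimes> a k \<otimes> inv (a i) = a k \<otimes> (a i \<otimes> ?W) \<otimes> inv (a i)"
    using ak ai by (simp add: m_assoc)
  then show ?thesis
    using ak ai assms by (simp add: c_part_commutes_a[symmetric] m_assoc)
qed

lemma a_mult_a_int_pow:
  assumes "1 \<le> k" "k < i" "i \<le> n"
  shows "a i \<otimes> a k [^] (e::int) = a k [^] e \<otimes> a i \<otimes> c_part (\<lambda>t. - e * lam k i t)"
proof -
  have ak: "a k \<in> carrier G" and ai: "a i \<in> carrier G"
    using assms a_closed by auto
  have "a i \<otimes> a k [^] e \<otimes> inv (a i) = (a k \<otimes> c_part (\<lambda>t. - lam k i t)) [^] e"
    using ak ai by (simp add: conj_int_pow a_conj_a[OF assms])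
  also have "\<dots> = a k [^] e \<otimes> c_part (\<lambda>t. - e * lam k i t)"
    using ak assms by (simp add: int_pow_mult_distrib c_part_commutes_a[symmetric] c_part_int_pow
        c_part_commutes_a_int_pow)
  finally have "a i \<otimes> a k [^] e = a k [^] e \<otimes> c_part (\<lambda>t. - e * lam k i t) \<otimes> a i"
    using ak ai by (simp add: inv_solve_right')
  then show ?thesis
    using ak ai assms by (simp add: m_assoc c_part_commutes_a)
qed

lemma a_mult_a_prod:
  assumes "set ks \<subseteq> {1..<i}" "i \<in> {1..n}"
  shows "a i \<otimes> pow_prod G a ks x =
    pow_prod G a ks x \<otimes> a i \<otimes> c_part (\<lambda>t. - (\<Sum>k\<leftarrow>ks. x k * lam k i t))"
  using assms(1)
proof (induct ks)
  case Nil
  then show ?case using assms(2) a_closed by simp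
next
  case (Cons k ks)
  let ?P = "pow_prod G a ks x" and ?W = "c_part (\<lambda>t. - x k * lam k i t)"
    and ?C = "c_part (\<lambda>t. - (\<Sum>k\<leftarrow>ks. x k * lam k i t))"
  have k: "1 \<le> k" "k < i" and ks: "set ks \<subseteq> {1..n}"
    using Cons.prems assms(2) by auto
  have ak: "a k \<in> carrier G" and ai: "a i \<in> carrier G" and P: "?P \<in> carrier G"
    using k ks assms(2) a_closed by auto
  have "a i \<otimes> pow_prod G a (k # ks) x = a k [^] x k \<otimes> a i \<otimes> (?W \<otimes> ?P)"
    using ak ai P assms(2) by (simp add: a_mult_a_int_pow[OF k] m_assoc[symmetric])
  also have "\<dots> = a k [^] x k \<otimes> (a i \<otimes> ?P) \<otimes> ?W"
    using ak ai P ks by (simp add: a_prod_commutes_c_part m_assoc)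
  also have "\<dots> = pow_prod G a (k # ks) x \<otimes> a i \<otimes> (?C \<otimes> ?W)"
    using ak ai P Cons by (simp add: m_assoc)
  also have "?C \<otimes> ?W = c_part (\<lambda>t. - (\<Sum>k\<leftarrow>k # ks. x k * lam k i t))"
    by (simp add: c_part_mult algebra_simps)
  finally show ?case .
qed

lemma elem_of_coords_act_a:
  assumes i: "i \<in> {1..n}"
  shows "a i \<otimes> elem_of_coords s = elem_of_coords (act_a lam i 1 s)"
proof -
  obtain x y where s: "s = (x, y)"
    by force
  define L R W where "L = pow_prod G a [1..<i] x" and "R = pow_prod G a [Suc i..<Suc n] x"
    and "W = c_part (a_carry lam i x)"
  have L_closed: "a ` set [1..<i] \<subseteq> carrier G" and R_closed: "a ` set [Suc i..<Suc n] \<subseteq> carrier G"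
    using i a_closed by (auto simp del: upt_Suc)
  have ai: "a i \<in> carrier G" and L: "L \<in> carrier G" and R: "R \<in> carrier G" and W: "W \<in> carrier G"
    using i a_closed L_closed R_closed by (auto simp: L_def R_def W_def)
  have a_part: "a_part x' = L \<otimes> (a i [^] x' i \<otimes> R)" if "\<And>k. k \<noteq> i \<Longrightarrow> x' k = x k" for x'
  proof -
    have "pow_prod G a [1..<i] x' = L" "pow_prod G a [Suc i..<Suc n] x' = R"
      using that by (auto simp: L_def R_def intro: pow_prod_cong simp del: upt_Suc)
    then show ?thesis
      unfolding a_part_def upt_split_at[OF i] using ai L_closed R_closed by (simp del: upt_Suc)
  qed
  have "a_carry lam i x = (\<lambda>t. - (\<Sum>k\<leftarrow>[1..<i]. x k * lam k i t))"
    by (simp add: fun_eq_iff a_carry_def sum_set_upt_conv_sum_list_nat[symmetric])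
  then have carry: "a i \<otimes> L = L \<otimes> a i \<otimes> W"
    using a_mult_a_prod[OF _ i, of "[1..<i]" x] by (simp add: L_def W_def)
  have "W \<otimes> a i [^] x i = a i [^] x i \<otimes> W"
    using i by (simp add: W_def c_part_commutes_a_int_pow)
  moreover have "R \<otimes> W = W \<otimes> R"
    unfolding R_def W_def by (rule a_prod_commutes_c_part) auto
  ultimately have W_central: "W \<otimes> (a i [^] x i \<otimes> R) = a i [^] x i \<otimes> R \<otimes> W"
    using ai R W by (simp add: m_assoc[symmetric]) (simp add: m_assoc)
  have "a i \<otimes> elem_of_coords s = (a i \<otimes> L) \<otimes> (a i [^] x i \<otimes> R) \<otimes> c_part y"
    using ai L R by (simp add: s elem_of_coords_def a_part[of x] m_assoc)
  also have "\<dots> = L \<otimes> a i \<otimes> (W \<otimes> (a i [^] x i \<otimes> R)) \<otimes> c_part y"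
    using ai L R W by (simp add: carry m_assoc)
  also have "\<dots> = L \<otimes> (a i \<otimes> a i [^] x i \<otimes> R) \<otimes> (W \<otimes> c_part y)"
    using ai L R W by (simp add: W_central m_assoc)
  also have "\<dots> = elem_of_coords (act_a lam i 1 s)"
    using ai L R by (simp add: s elem_of_coords_def act_a_def a_part int_pow_mult c_part_mult W_def
        m_assoc add.commute)
  finally show ?thesis .
qed

lemma elem_of_coords_act_c:
  assumes t: "t \<in> {1..m}"
  shows "c t \<otimes> elem_of_coords s = elem_of_coords (act_c t 1 s)"
proof -
  obtain x y where s: "s = (x, y)"
    by force
  have "c t \<otimes> elem_of_coords s = c_part (\<lambda>s. if s = t then 1 else 0) \<otimes> a_part x \<otimes> c_part y"
    using t c_closed by (simp add: s elem_of_coords_def c_part_indicator m_assoc)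
  also have "c_part (\<lambda>s. if s = t then 1 else 0) \<otimes> a_part x = a_part x \<otimes> c_part (\<lambda>s. if s = t then 1 else 0)"
    unfolding a_part_def by (rule a_prod_commutes_c_part[symmetric]) auto
  also have "a_part x \<otimes> c_part (\<lambda>s. if s = t then 1 else 0) \<otimes> c_part y =
      a_part x \<otimes> c_part (\<lambda>s. (if s = t then 1 else 0) + y s)"
    by (simp add: c_part_mult m_assoc)
  also have "(\<lambda>s. (if s = t then 1 else 0) + y s) = y(t := y t + 1)"
    by (auto simp: fun_eq_iff)
  finally show ?thesis
    by (simp add: s elem_of_coords_def act_c_def fun_upd_def)
qed

lemma elem_of_coords_act_a_inv:
  assumes "i \<in> {1..n}"
  shows "inv (a i) \<otimes> elem_of_coords s = elem_of_coords (act_a lam i (-1) s)"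
proof -
  have "elem_of_coords s = a i \<otimes> elem_of_coords (act_a lam i (-1) s)"
    using elem_of_coords_act_a[OF assms, of "act_a lam i (-1) s"] by (simp add: act_a_add)
  then show ?thesis
    using assms a_closed by simp
qed

lemma elem_of_coords_act_c_inv:
  assumes "t \<in> {1..m}"
  shows "inv (c t) \<otimes> elem_of_coords s = elem_of_coords (act_c t (-1) s)"
proof -
  have "elem_of_coords s = c t \<otimes> elem_of_coords (act_c t (-1) s)"
    using elem_of_coords_act_c[OF assms, of "act_c t (-1) s"] by (simp add: act_c_add)
  then show ?thesis
    using assms c_closed by simp
qed

definition letter_val :: "gen \<times> bool \<Rightarrow> 'a" where
  "letter_val l = (case l of
      (A i, b) \<Rightarrow> if b then inv (a i) else a i
    | (C t, b) \<Rightarrow> if b then inv (c t) else c t)"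

lemma elem_of_coords_act_letter:
  assumes "fst l \<in> gens n m"
  shows "letter_val l \<otimes> elem_of_coords s = elem_of_coords (act_letter lam l s)"
proof -
  obtain x b where l: "l = (x, b)"
    by force
  show ?thesis
    using assms by (cases x) (auto simp: l letter_val_def gens_def elem_of_coords_act_a_inv
        elem_of_coords_act_c_inv elem_of_coords_act_a elem_of_coords_act_c)
qed

end

locale class2_coordinates = class2_generators +
  fixes coords :: "'a \<Rightarrow> coords"
  assumes coords_a_mult: "i \<in> {1..n} \<Longrightarrow> g \<in> carrier G \<Longrightarrow> coords (a i \<otimes> g) = act_a lam i 1 (coords g)"
    and coords_c_mult: "t \<in> {1..m} \<Longrightarrow> g \<in> carrier G \<Longrightarrow> coords (c t \<otimes> g) = act_c t 1 (coords g)"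
    and coords_one: "coords \<one> = (\<lambda>_. 0, \<lambda>_. 0)"
begin

lemma coords_a_int_pow_mult:
  "i \<in> {1..n} \<Longrightarrow> g \<in> carrier G \<Longrightarrow> coords (a i [^] (k::int) \<otimes> g) = act_a lam i k (coords g)"
  using a_closed coords_a_mult by (intro int_pow_mult_equivariant[where act = "act_a lam i"]) (auto simp: act_a_add)

lemma coords_c_int_pow_mult:
  "t \<in> {1..m} \<Longrightarrow> g \<in> carrier G \<Longrightarrow> coords (c t [^] (k::int) \<otimes> g) = act_c t k (coords g)"
  using c_closed coords_c_mult by (intro int_pow_mult_equivariant[where act = "act_c t"]) (auto simp: act_c_add)

lemma coords_c_prod:
  "distinct ts \<Longrightarrow> set ts \<subseteq> {1..m} \<Longrightarrow>
    coords (pow_prod G c ts y) = (\<lambda>_. 0, \<lambda>t. if t \<in> set ts then y t else 0)"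
proof (induct ts)
  case Nil
  then show ?case by (simp add: coords_one)
next
  case (Cons t ts)
  have "pow_prod G c ts y \<in> carrier G"
    using Cons.prems c_closed by (intro pow_prod_closed) auto
  then have "coords (pow_prod G c (t # ts) y) = act_c t (y t) (coords (pow_prod G c ts y))"
    using Cons.prems by (simp add: coords_c_int_pow_mult)
  with Cons show ?case
    by (auto simp: act_c_def fun_eq_iff)
qed

lemma coords_a_prod_mult:
  "sorted_wrt (<) is \<Longrightarrow> set is \<subseteq> {1..n} \<Longrightarrow> h \<in> carrier G \<Longrightarrow> coords h = (\<lambda>_. 0, y) \<Longrightarrow>
    coords (pow_prod G a is x \<otimes> h) = (\<lambda>k. if k \<in> set is then x k else 0, y)"
proof (induct "is")
  case Nil
  then show ?case by simp
next
  case (Cons i "is")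
  let ?x = "\<lambda>k. if k \<in> set is then x k else 0"
  have i: "i \<in> {1..n}" and rest: "pow_prod G a is x \<otimes> h \<in> carrier G"
    using Cons.prems a_closed by auto
  then have "coords (pow_prod G a (i # is) x \<otimes> h) = coords (a i [^] x i \<otimes> (pow_prod G a is x \<otimes> h))"
    using Cons.prems a_closed by (simp add: m_assoc)
  also have "\<dots> = act_a lam i (x i) (?x, y)"
    using Cons i rest by (simp add: coords_a_int_pow_mult)
  finally have "coords (pow_prod G a (i # is) x \<otimes> h) = act_a lam i (x i) (?x, y)" .
  moreover have "a_carry lam i ?x = (\<lambda>_. 0)"
    using Cons.prems(1) by (force simp: a_carry_def fun_eq_iff intro!: sum.neutral)
  ultimately show ?case
    using Cons.prems(1) by (auto simp: act_a_def fun_eq_iff)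
qed

lemma coords_elem_of_coords:
  "coords (elem_of_coords (x, y)) =
    (\<lambda>i. if i \<in> {1..n} then x i else 0, \<lambda>t. if t \<in> {1..m} then y t else 0)"
proof -
  have "coords (c_part y) = (\<lambda>_. 0, \<lambda>t. if t \<in> {1..m} then y t else 0)"
    unfolding c_part_def by (subst coords_c_prod) auto
  then show ?thesis
    unfolding elem_of_coords_def a_part_def
    by (subst coords_a_prod_mult) (auto simp: sorted_wrt_upt simp del: upt_Suc)
qed

end

section \<open>The presented group\<close>

lemma A_in_gens [simp]: "A i \<in> gens n m \<longleftrightarrow> i \<in> {1..n}"
  by (auto simp: gens_def)

lemma C_in_gens [simp]: "C t \<in> gens n m \<longleftrightarrow> t \<in> {1..m}"
  by (auto simp: gens_def)

lemma rels_over_rels: "rels_over (gens n m) (rels n m lam)"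
  unfolding rels_over_def rels_def by (auto intro!: words_concat)

text \<open>The commutator relations only involve c_1, ..., c_m, so for the action to respect them
  exactly it must ignore lam i j t for t outside {1..m}.\<close>

definition truncate_lam :: "nat \<Rightarrow> (nat \<Rightarrow> nat \<Rightarrow> nat \<Rightarrow> int) \<Rightarrow> nat \<Rightarrow> nat \<Rightarrow> nat \<Rightarrow> int" where
  "truncate_lam m lam i j t = (if t \<in> {1..m} then lam i j t else 0)"

lemma foldr_act_letter_rels:
  assumes "(l, r) \<in> rels n m lam"
  shows "foldr (act_letter (truncate_lam m lam)) l = foldr (act_letter (truncate_lam m lam)) r"
proof (rule ext)
  fix s :: coords
  obtain x y where s: "s = (x, y)"
    by force
  show "foldr (act_letter (truncate_lam m lam)) l s = foldr (act_letter (truncate_lam m lam)) r s"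
    using assms unfolding rels_def
  proof (elim UnE CollectE exE conjE)
    fix i j
    assume lr: "(l, r) = (wcomm (letter (A i)) (letter (A j)),
        concat (map (\<lambda>t. wpow (letter (C t)) (lam i j t)) [1..<Suc m]))"
      and ij: "1 \<le> i" "i < j" "j \<le> n"
    have "foldr (act_letter (truncate_lam m lam)) l s = (x, \<lambda>t. y t + truncate_lam m lam i j t)"
      using lr ij by (simp add: s wcomm_def letter_def act_a_commutator)
    also have "\<dots> = foldr (\<lambda>t. act_c t (lam i j t)) [1..<Suc m] s"
      by (simp add: s foldr_act_c truncate_lam_def less_Suc_eq_le del: upt_Suc)
    also have "\<dots> = foldr (act_letter (truncate_lam m lam)) r s"
      using lr by (simp add: foldr_concat foldr_map comp_def foldr_act_letter_wpow_C del: upt_Suc)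
    finally show ?thesis .
  qed (auto simp: s wcomm_def letter_def act_a_def act_c_def a_carry_upd_ge fun_eq_iff)
qed

definition word_coords :: "(nat \<Rightarrow> nat \<Rightarrow> nat \<Rightarrow> int) \<Rightarrow> gen word \<Rightarrow> coords" where
  "word_coords lam w = foldr (act_letter lam) w (\<lambda>_. 0, \<lambda>_. 0)"

text \<open>Any representative word may be used: the choice is irrelevant by Gpres_coords_cls.\<close>

definition Gpres_coords :: "nat \<Rightarrow> nat \<Rightarrow> (nat \<Rightarrow> nat \<Rightarrow> nat \<Rightarrow> int) \<Rightarrow> gen word set \<Rightarrow> coords" where
  "Gpres_coords n m lam g = word_coords (truncate_lam m lam) (SOME w. w \<in> g)"

context
  fixes n m :: nat and lam :: "nat \<Rightarrow> nat \<Rightarrow> nat \<Rightarrow> int"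
begin

abbreviation cls :: "gen word \<Rightarrow> gen word set" where
  "cls \<equiv> pres_class (gens n m) (rels n m lam)"

lemma Gpres_coords_cls:
  assumes "w \<in> words (gens n m)"
  shows "Gpres_coords n m lam (cls w) = word_coords (truncate_lam m lam) w"
proof -
  have "(w, SOME w'. w' \<in> cls w) \<in> pres_eq (gens n m) (rels n m lam)"
    using someI[of "\<lambda>w'. w' \<in> cls w", OF self_in_pres_class[OF assms]] by (simp add: pres_class_def)
  then have "(SOME w'. w' \<in> cls w, w) \<in> pres_eq (gens n m) (rels n m lam)"
    by (rule pres_eq.sym)
  then have "foldr (act_letter (truncate_lam m lam)) (SOME w'. w' \<in> cls w) = foldr (act_letter (truncate_lam m lam)) w"
    by (rule pres_eq_foldr_eq) (auto simp: act_letter_cancel intro: foldr_act_letter_rels)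
  then show ?thesis
    by (simp add: Gpres_coords_def word_coords_def)
qed

lemma group_Gpres: "group (Gpres n m lam)"
  unfolding Gpres_def by (rule group_presented_group[OF rels_over_rels])

lemma carrier_Gpres: "carrier (Gpres n m lam) = cls ` words (gens n m)"
  by (simp add: Gpres_def carrier_presented_group)

lemma one_Gpres: "\<one>\<^bsub>Gpres n m lam\<^esub> = cls []"
  by (simp add: Gpres_def one_presented_group)

lemma cls_append:
  "u \<in> words (gens n m) \<Longrightarrow> v \<in> words (gens n m) \<Longrightarrow> cls (u @ v) = cls u \<otimes>\<^bsub>Gpres n m lam\<^esub> cls v"
  by (simp add: Gpres_def pres_class_append[OF rels_over_rels])

lemma a_el_cls: "a_el n m lam i = cls (letter (A i))"
  by (simp add: a_el_def gen_elem_def pres_class_def)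

lemma c_el_cls: "c_el n m lam t = cls (letter (C t))"
  by (simp add: c_el_def gen_elem_def pres_class_def)

lemma cls_rel_commute:
  assumes "(wcomm u v, []) \<in> rels n m lam" "u \<in> words (gens n m)" "v \<in> words (gens n m)"
  shows "cls u \<otimes>\<^bsub>Gpres n m lam\<^esub> cls v = cls v \<otimes>\<^bsub>Gpres n m lam\<^esub> cls u"
proof (rule group.commute_if_commutator_one[OF group_Gpres])
  have "cls (wcomm u v) = \<one>\<^bsub>Gpres n m lam\<^esub>"
    using pres_class_rel[OF rels_over_rels assms(1)] by (simp add: Gpres_def one_presented_group)
  then show "inv\<^bsub>Gpres n m lam\<^esub> (cls u) \<otimes>\<^bsub>Gpres n m lam\<^esub> inv\<^bsub>Gpres n m lam\<^esub> (cls v)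
      \<otimes>\<^bsub>Gpres n m lam\<^esub> cls u \<otimes>\<^bsub>Gpres n m lam\<^esub> cls v = \<one>\<^bsub>Gpres n m lam\<^esub>"
    using assms(2,3) by (simp add: Gpres_def pres_class_wcomm[OF rels_over_rels])
qed (use assms(2,3) in \<open>simp_all add: carrier_Gpres\<close>)

lemma Gpres_a_commutator:
  assumes "1 \<le> i" "i < j" "j \<le> n"
  shows "inv\<^bsub>Gpres n m lam\<^esub> (a_el n m lam i) \<otimes>\<^bsub>Gpres n m lam\<^esub> inv\<^bsub>Gpres n m lam\<^esub> (a_el n m lam j)
      \<otimes>\<^bsub>Gpres n m lam\<^esub> a_el n m lam i \<otimes>\<^bsub>Gpres n m lam\<^esub> a_el n m lam j =
    pow_prod (Gpres n m lam) (c_el n m lam) [1..<Suc m] (truncate_lam m lam i j)"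
proof -
  interpret group "Gpres n m lam"
    by (rule group_Gpres)
  have "cls (wcomm (letter (A i)) (letter (A j))) =
      cls (concat (map (\<lambda>t. wpow (letter (C t)) (lam i j t)) [1..<Suc m]))"
    using assms by (intro pres_class_rel[OF rels_over_rels]) (auto simp: rels_def)
  also have "\<dots> = pow_prod (Gpres n m lam) (c_el n m lam) [1..<Suc m] (lam i j)"
    by (subst pres_class_concat[OF rels_over_rels])
      (auto simp: Gpres_def pow_prod_def c_el_cls pres_class_wpow[OF rels_over_rels] simp del: upt_Suc
        intro!: arg_cong[where f = "lprod _"] map_cong)
  also have "\<dots> = pow_prod (Gpres n m lam) (c_el n m lam) [1..<Suc m] (truncate_lam m lam i j)"
    by (rule pow_prod_cong) (auto simp: truncate_lam_def simp del: upt_Suc)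
  finally show ?thesis
    using assms by (simp add: a_el_cls Gpres_def pres_class_wcomm[OF rels_over_rels])
qed

lemma Gpres_coords_letter_mult:
  assumes "g \<in> carrier (Gpres n m lam)" "x \<in> gens n m"
  shows "Gpres_coords n m lam (cls (letter x) \<otimes>\<^bsub>Gpres n m lam\<^esub> g) =
    act_letter (truncate_lam m lam) (x, False) (Gpres_coords n m lam g)"
  using assms by (auto simp: carrier_Gpres letter_def Gpres_coords_cls word_coords_def simp flip: cls_append)

lemma class2_generators_Gpres:
  "class2_generators (Gpres n m lam) n m (truncate_lam m lam) (a_el n m lam) (c_el n m lam)"
proof (intro class2_generators.intro class2_generators_axioms.intro group_Gpres)
  fix i t
  assume "i \<in> {1..n}" "t \<in> {1..m}"
  moreover have "(wcomm (letter (A i)) (letter (C t)), []) \<in> rels n m lam"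
    using calculation unfolding rels_def by blast
  ultimately show "a_el n m lam i \<otimes>\<^bsub>Gpres n m lam\<^esub> c_el n m lam t = c_el n m lam t \<otimes>\<^bsub>Gpres n m lam\<^esub> a_el n m lam i"
    unfolding a_el_cls c_el_cls by (intro cls_rel_commute) simp_all
next
  fix s t
  assume "s \<in> {1..m}" "t \<in> {1..m}"
  moreover have "(wcomm (letter (C s)) (letter (C t)), []) \<in> rels n m lam"
    using calculation unfolding rels_def by blast
  ultimately show "c_el n m lam s \<otimes>\<^bsub>Gpres n m lam\<^esub> c_el n m lam t = c_el n m lam t \<otimes>\<^bsub>Gpres n m lam\<^esub> c_el n m lam s"
    unfolding c_el_cls by (intro cls_rel_commute) simp_all
qed (simp_all add: a_el_cls c_el_cls carrier_Gpres Gpres_a_commutator[unfolded a_el_cls] del: upt_Suc)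

lemma class2_coordinates_Gpres:
  "class2_coordinates (Gpres n m lam) n m (truncate_lam m lam) (a_el n m lam) (c_el n m lam)
    (Gpres_coords n m lam)"
proof (intro class2_coordinates.intro class2_generators_Gpres class2_coordinates_axioms.intro)
  fix i g
  assume "i \<in> {1..n}" "g \<in> carrier (Gpres n m lam)"
  then show "Gpres_coords n m lam (a_el n m lam i \<otimes>\<^bsub>Gpres n m lam\<^esub> g) =
      act_a (truncate_lam m lam) i 1 (Gpres_coords n m lam g)"
    using Gpres_coords_letter_mult[of g "A i"] by (simp add: a_el_cls)
next
  fix t g
  assume "t \<in> {1..m}" "g \<in> carrier (Gpres n m lam)"
  then show "Gpres_coords n m lam (c_el n m lam t \<otimes>\<^bsub>Gpres n m lam\<^esub> g) =
      act_c t 1 (Gpres_coords n m lam g)"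
    using Gpres_coords_letter_mult[of g "C t"] by (simp add: c_el_cls)
next
  show "Gpres_coords n m lam \<one>\<^bsub>Gpres n m lam\<^esub> = (\<lambda>_. 0, \<lambda>_. 0)"
    using Gpres_coords_cls[of "[]"] by (simp add: one_Gpres word_coords_def)
qed

interpretation Gpres: class2_coordinates "Gpres n m lam" n m "truncate_lam m lam" "a_el n m lam" "c_el n m lam"
    "Gpres_coords n m lam"
  by (rule class2_coordinates_Gpres)

lemma cls_Cons:
  assumes "l # w \<in> words (gens n m)"
  shows "cls (l # w) = Gpres.letter_val l \<otimes>\<^bsub>Gpres n m lam\<^esub> cls w"
proof -
  obtain x b where l: "l = (x, b)"
    by force
  have x: "x \<in> gens n m" and w: "w \<in> words (gens n m)"
    using assms l by auto
  have "cls [(x, b)] = Gpres.letter_val (x, b)"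
  proof (cases b)
    case True
    then have "cls [(x, b)] = inv\<^bsub>Gpres n m lam\<^esub> (cls (letter x))"
      using x by (simp add: Gpres_def inv_presented_group[OF rels_over_rels] letter_def winv_def)
    then show ?thesis
      using True by (cases x) (simp_all add: Gpres.letter_val_def a_el_cls c_el_cls)
  next
    case False
    then show ?thesis
      by (cases x) (simp_all add: Gpres.letter_val_def a_el_cls c_el_cls letter_def)
  qed
  then show ?thesis
    using x w cls_append[of "[(x, b)]" w] by (simp add: l)
qed

lemma cls_eq_elem_of_coords:
  "w \<in> words (gens n m) \<Longrightarrow> cls w = Gpres.elem_of_coords (word_coords (truncate_lam m lam) w)"
proof (induct w)
  case Nil
  show ?case
    by (simp add: word_coords_def one_Gpres)
next
  case (Cons l w)
  then show ?case
    by (simp add: cls_Cons word_coords_def Gpres.elem_of_coords_act_letter)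
qed

lemma normal_form_eq_elem_of_coords: "normal_form n m lam x y = Gpres.elem_of_coords (x, y)"
  by (simp add: normal_form_def Gpres.elem_of_coords_def Gpres.a_part_def Gpres.c_part_def
      pow_prod_def a_el_def c_el_def)

lemma normal_form_Gpres_coords:
  assumes "g \<in> carrier (Gpres n m lam)"
  shows "normal_form n m lam (fst (Gpres_coords n m lam g)) (snd (Gpres_coords n m lam g)) = g"
proof -
  obtain w where w: "w \<in> words (gens n m)" and g: "g = cls w"
    using assms by (auto simp: carrier_Gpres)
  have "Gpres_coords n m lam g = word_coords (truncate_lam m lam) w"
    using Gpres_coords_cls[OF w] g by simp
  then show ?thesis
    using cls_eq_elem_of_coords[OF w] g by (simp add: normal_form_eq_elem_of_coords)
qed

lemma Gpres_coords_normal_form: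
  "Gpres_coords n m lam (normal_form n m lam x y) =
    (\<lambda>i. if i \<in> {1..n} then x i else 0, \<lambda>t. if t \<in> {1..m} then y t else 0)"
  by (simp add: normal_form_eq_elem_of_coords Gpres.coords_elem_of_coords)

end

theorem lemma4p3:
  fixes n m :: nat and lam :: "nat \<Rightarrow> nat \<Rightarrow> nat \<Rightarrow> int"
  assumes "n \<ge> 2" and "m \<ge> 1"
  shows "\<exists>(\<alpha> :: nat \<Rightarrow> gen word set \<Rightarrow> int) (\<gamma> :: nat \<Rightarrow> gen word set \<Rightarrow> int).
           \<forall>g \<in> carrier (Gpres n m lam).
             g = normal_form n m lam (\<lambda>i. \<alpha> i g) (\<lambda>t. \<gamma> t g) \<and>
             (\<forall>x y. g = normal_form n m lam x y \<longrightarrow>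
                (\<forall>i \<in> {1..n}. x i = \<alpha> i g) \<and> (\<forall>t \<in> {1..m}. y t = \<gamma> t g))"
  by (rule exI[of _ "\<lambda>i g. fst (Gpres_coords n m lam g) i"],
      rule exI[of _ "\<lambda>t g. snd (Gpres_coords n m lam g) t"])
    (auto simp: normal_form_Gpres_coords Gpres_coords_normal_form)

end
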